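(* For any collective choice problem satisfying the standing assumptions in the context, an equilibrium exists in the game with private signals. In the public information benchmark, in which every voter observes the entire signal profile $s$ before voting, an equilibrium exists and it is unique.
   Context: Let $n\ge3$ be odd, $\mathcal N=\{1,\dots,n\}$, $\tau=(n-1)/2$; voters vote for $p^*$ or $p_*$ and a policy wins iff it gets strictly more than $\tau$ votes. Finite payoff sets $\mathcal V^{p^*},\mathcal V^{p_*}\subset\mathbb R$, signal set $\mathcal S=\{s^0,\dots,s^K\}$, $\mathcal M=\{s^1,\dots,s^K\}$, state space $\Omega=(\mathcal V^{p^*}\times\mathcal V^{p_*})^n\times\mathcal S^n$ with probability $P$; $V_i^d=V_i^{p^*}-V_i^{p_*}$; $V_i^d(E)=E_P[V_i^d\mid E]$ if $P(E)>0$, $0$ otherwise. $s^k\in\mathcal M$ is good news if $V_i^d(S_i=s^k)>0$, bad news if $<0$; $G,B$ count voters with good/bad news. Standing assumptions: $V_i^d(\Omega)>0$; $P$ invariant under permutations of voters; if $s_i=s^0$ then $P(V=v,S=s)=P(V=v,S_{-i}=s_{-i})P(S_i=s^0)$; if $s_i\ne s^0$ then $V_i^d(S=s)>0$ iff $V_i^d(S_i=s_i)>0$; $V_i^d(E)\ne0$ for all $i$ and non-null $E$; $P(B\ge1)>0$ and $P(G\ge\tau)>0$. With private signals, voter $i$ observes only $s_i$ and a strategy is $\sigma_i:\mathcal S\to[0,1]$; with public information, a strategy is $\phi_i:\mathcal S^n\to[0,1]$. "Equilibrium" means Bayes–Nash equilibrium in weakly undominated strategies. *)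

theory Defs
  imports Complex_Main "HOL-Library.FuncSet" "HOL-Combinatorics.Permutations"
begin

text \<open>Signals s^0, ..., s^K are encoded as the numbers 0..K (s^0 = 0).
A state is a pair (v, s): v i = (V_i^{p*}, V_i^{p_*}) and s i is the signal index of voter i.
Both components are extensional (undefined outside the voters) so the state space is finite.\<close>

type_synonym state = "(nat \<Rightarrow> real \<times> real) \<times> (nat \<Rightarrow> nat)"

definition voters :: "nat \<Rightarrow> nat set" where
  "voters n = {1..n}"

definition tau :: "nat \<Rightarrow> nat" where
  "tau n = (n - 1) div 2"

definition profiles :: "nat \<Rightarrow> nat \<Rightarrow> (nat \<Rightarrow> nat) set" where
  "profiles n K = PiE {1..n} (\<lambda>_. {0..K})"

definition Omega :: "nat \<Rightarrow> nat \<Rightarrow> real set \<Rightarrow> real set \<Rightarrow> state set" where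
  "Omega n K Vs Vl = {(v, s). v \<in> PiE {1..n} (\<lambda>_. Vs \<times> Vl) \<and> s \<in> profiles n K}"

definition Pr :: "state set \<Rightarrow> (state \<Rightarrow> real) \<Rightarrow> state set \<Rightarrow> real" where
  "Pr \<Omega> P E = (\<Sum>\<omega>\<in>E \<inter> \<Omega>. P \<omega>)"

definition Vd :: "nat \<Rightarrow> state \<Rightarrow> real" where
  "Vd i \<omega> = fst (fst \<omega> i) - snd (fst \<omega> i)"

definition VdE :: "state set \<Rightarrow> (state \<Rightarrow> real) \<Rightarrow> nat \<Rightarrow> state set \<Rightarrow> real" where
  "VdE \<Omega> P i E = (if Pr \<Omega> P E > 0
      then (\<Sum>\<omega>\<in>E \<inter> \<Omega>. P \<omega> * Vd i \<omega>) / Pr \<Omega> P E else 0)"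

definition sig_event :: "state set \<Rightarrow> nat \<Rightarrow> nat \<Rightarrow> state set" where
  "sig_event \<Omega> i k = {\<omega> \<in> \<Omega>. snd \<omega> i = k}"

definition prof_event :: "state set \<Rightarrow> (nat \<Rightarrow> nat) \<Rightarrow> state set" where
  "prof_event \<Omega> s = {\<omega> \<in> \<Omega>. snd \<omega> = s}"

definition good_news :: "state set \<Rightarrow> (state \<Rightarrow> real) \<Rightarrow> nat \<Rightarrow> nat \<Rightarrow> bool" where
  "good_news \<Omega> P i k \<longleftrightarrow> k \<noteq> 0 \<and> VdE \<Omega> P i (sig_event \<Omega> i k) > 0"

definition bad_news :: "state set \<Rightarrow> (state \<Rightarrow> real) \<Rightarrow> nat \<Rightarrow> nat \<Rightarrow> bool" where
  "bad_news \<Omega> P i k \<longleftrightarrow> k \<noteq> 0 \<and> VdE \<Omega> P i (sig_event \<Omega> i k) < 0"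

definition Gcount :: "nat \<Rightarrow> state set \<Rightarrow> (state \<Rightarrow> real) \<Rightarrow> state \<Rightarrow> nat" where
  "Gcount n \<Omega> P \<omega> = card {i \<in> voters n. good_news \<Omega> P i (snd \<omega> i)}"

definition Bcount :: "nat \<Rightarrow> state set \<Rightarrow> (state \<Rightarrow> real) \<Rightarrow> state \<Rightarrow> nat" where
  "Bcount n \<Omega> P \<omega> = card {i \<in> voters n. bad_news \<Omega> P i (snd \<omega> i)}"

definition standing_assumptions ::
  "nat \<Rightarrow> nat \<Rightarrow> real set \<Rightarrow> real set \<Rightarrow> (state \<Rightarrow> real) \<Rightarrow> bool" where
  "standing_assumptions n K Vs Vl P \<longleftrightarrow>
     (let \<Omega> = Omega n K Vs Vl in
       odd n \<and> n \<ge> 3 \<and> finite Vs \<and> finite Vl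
     \<and> (\<forall>\<omega>\<in>\<Omega>. P \<omega> \<ge> 0) \<and> (\<Sum>\<omega>\<in>\<Omega>. P \<omega>) = 1
     \<comment> \<open>V_i^d(\<Omega>) > 0\<close>
     \<and> (\<forall>i\<in>voters n. VdE \<Omega> P i \<Omega> > 0)
     \<comment> \<open>P is invariant under permutations of the voters\<close>
     \<and> (\<forall>\<pi>. \<pi> permutes voters n \<longrightarrow>
           (\<forall>v s. (v, s) \<in> \<Omega> \<longrightarrow> P (v \<circ> \<pi>, s \<circ> \<pi>) = P (v, s)))
     \<comment> \<open>the signal s^0 is independent of everything else\<close>
     \<and> (\<forall>i\<in>voters n. \<forall>v s. (v, s) \<in> \<Omega> \<longrightarrow> s i = 0 \<longrightarrow>
           P (v, s) = (\<Sum>t\<in>{0..K}. P (v, s(i := t))) * Pr \<Omega> P (sig_event \<Omega> i 0))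
     \<comment> \<open>if s_i \<noteq> s^0 then V_i^d(S = s) > 0 iff V_i^d(S_i = s_i) > 0\<close>
     \<and> (\<forall>i\<in>voters n. \<forall>s\<in>profiles n K. s i \<noteq> 0 \<longrightarrow>
           (VdE \<Omega> P i (prof_event \<Omega> s) > 0 \<longleftrightarrow> VdE \<Omega> P i (sig_event \<Omega> i (s i)) > 0))
     \<comment> \<open>V_i^d(E) \<noteq> 0 for all non-null events E\<close>
     \<and> (\<forall>i\<in>voters n. \<forall>E. E \<subseteq> \<Omega> \<longrightarrow> Pr \<Omega> P E > 0 \<longrightarrow> VdE \<Omega> P i E \<noteq> 0)
     \<comment> \<open>P(B \<ge> 1) > 0 and P(G \<ge> tau) > 0\<close>
     \<and> Pr \<Omega> P {\<omega> \<in> \<Omega>. Bcount n \<Omega> P \<omega> \<ge> 1} > 0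
     \<and> Pr \<Omega> P {\<omega> \<in> \<Omega>. Gcount n \<Omega> P \<omega> \<ge> tau n} > 0)"

definition win_prob :: "nat \<Rightarrow> (nat \<Rightarrow> real) \<Rightarrow> real" where
  "win_prob n q = (\<Sum>A\<in>{A. A \<subseteq> voters n \<and> card A > tau n}.
       (\<Prod>j\<in>A. q j) * (\<Prod>j\<in>voters n - A. 1 - q j))"

definition EU :: "nat \<Rightarrow> nat \<Rightarrow> real set \<Rightarrow> real set \<Rightarrow> (state \<Rightarrow> real) \<Rightarrow> nat
    \<Rightarrow> (nat \<Rightarrow> state \<Rightarrow> real) \<Rightarrow> real" where
  "EU n K Vs Vl P i beh = (\<Sum>\<omega>\<in>Omega n K Vs Vl. P \<omega> *
      (win_prob n (\<lambda>j. beh j \<omega>) * fst (fst \<omega> i)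
       + (1 - win_prob n (\<lambda>j. beh j \<omega>)) * snd (fst \<omega> i)))"

definition valid_sig_strategy :: "nat \<Rightarrow> (nat \<Rightarrow> real) \<Rightarrow> bool" where
  "valid_sig_strategy K f \<longleftrightarrow> (\<forall>k\<in>{0..K}. 0 \<le> f k \<and> f k \<le> 1)"

definition valid_priv_profile :: "nat \<Rightarrow> nat \<Rightarrow> (nat \<Rightarrow> nat \<Rightarrow> real) \<Rightarrow> bool" where
  "valid_priv_profile n K \<sigma> \<longleftrightarrow> (\<forall>i\<in>voters n. valid_sig_strategy K (\<sigma> i))"

definition priv_beh :: "(nat \<Rightarrow> nat \<Rightarrow> real) \<Rightarrow> nat \<Rightarrow> state \<Rightarrow> real" where
  "priv_beh \<sigma> j \<omega> = \<sigma> j (snd \<omega> j)"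

definition BNE_priv :: "nat \<Rightarrow> nat \<Rightarrow> real set \<Rightarrow> real set \<Rightarrow> (state \<Rightarrow> real)
    \<Rightarrow> (nat \<Rightarrow> nat \<Rightarrow> real) \<Rightarrow> bool" where
  "BNE_priv n K Vs Vl P \<sigma> \<longleftrightarrow> valid_priv_profile n K \<sigma> \<and>
     (\<forall>i\<in>voters n. \<forall>f. valid_sig_strategy K f \<longrightarrow>
        EU n K Vs Vl P i (priv_beh (\<sigma>(i := f))) \<le> EU n K Vs Vl P i (priv_beh \<sigma>))"

definition weakly_dominated_priv :: "nat \<Rightarrow> nat \<Rightarrow> real set \<Rightarrow> real set \<Rightarrow> (state \<Rightarrow> real)
    \<Rightarrow> nat \<Rightarrow> (nat \<Rightarrow> real) \<Rightarrow> bool" where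
  "weakly_dominated_priv n K Vs Vl P i f \<longleftrightarrow>
     (\<exists>g. valid_sig_strategy K g \<and>
        (\<forall>\<sigma>. valid_priv_profile n K \<sigma> \<longrightarrow>
            EU n K Vs Vl P i (priv_beh (\<sigma>(i := f))) \<le> EU n K Vs Vl P i (priv_beh (\<sigma>(i := g)))) \<and>
        (\<exists>\<sigma>. valid_priv_profile n K \<sigma> \<and>
            EU n K Vs Vl P i (priv_beh (\<sigma>(i := f))) < EU n K Vs Vl P i (priv_beh (\<sigma>(i := g)))))"

definition equilibrium_priv :: "nat \<Rightarrow> nat \<Rightarrow> real set \<Rightarrow> real set \<Rightarrow> (state \<Rightarrow> real)
    \<Rightarrow> (nat \<Rightarrow> nat \<Rightarrow> real) \<Rightarrow> bool" where
  "equilibrium_priv n K Vs Vl P \<sigma> \<longleftrightarrow> BNE_priv n K Vs Vl P \<sigma> \<and>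
     (\<forall>i\<in>voters n. \<not> weakly_dominated_priv n K Vs Vl P i (\<sigma> i))"

definition valid_pub_strategy :: "nat \<Rightarrow> nat \<Rightarrow> ((nat \<Rightarrow> nat) \<Rightarrow> real) \<Rightarrow> bool" where
  "valid_pub_strategy n K f \<longleftrightarrow> (\<forall>s\<in>profiles n K. 0 \<le> f s \<and> f s \<le> 1)"

definition valid_pub_profile :: "nat \<Rightarrow> nat \<Rightarrow> (nat \<Rightarrow> (nat \<Rightarrow> nat) \<Rightarrow> real) \<Rightarrow> bool" where
  "valid_pub_profile n K \<phi> \<longleftrightarrow> (\<forall>i\<in>voters n. valid_pub_strategy n K (\<phi> i))"

definition pub_beh :: "(nat \<Rightarrow> (nat \<Rightarrow> nat) \<Rightarrow> real) \<Rightarrow> nat \<Rightarrow> state \<Rightarrow> real" where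
  "pub_beh \<phi> j \<omega> = \<phi> j (snd \<omega>)"

definition BNE_pub :: "nat \<Rightarrow> nat \<Rightarrow> real set \<Rightarrow> real set \<Rightarrow> (state \<Rightarrow> real)
    \<Rightarrow> (nat \<Rightarrow> (nat \<Rightarrow> nat) \<Rightarrow> real) \<Rightarrow> bool" where
  "BNE_pub n K Vs Vl P \<phi> \<longleftrightarrow> valid_pub_profile n K \<phi> \<and>
     (\<forall>i\<in>voters n. \<forall>f. valid_pub_strategy n K f \<longrightarrow>
        EU n K Vs Vl P i (pub_beh (\<phi>(i := f))) \<le> EU n K Vs Vl P i (pub_beh \<phi>))"

definition weakly_dominated_pub :: "nat \<Rightarrow> nat \<Rightarrow> real set \<Rightarrow> real set \<Rightarrow> (state \<Rightarrow> real)
    \<Rightarrow> nat \<Rightarrow> ((nat \<Rightarrow> nat) \<Rightarrow> real) \<Rightarrow> bool" where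
  "weakly_dominated_pub n K Vs Vl P i f \<longleftrightarrow>
     (\<exists>g. valid_pub_strategy n K g \<and>
        (\<forall>\<phi>. valid_pub_profile n K \<phi> \<longrightarrow>
            EU n K Vs Vl P i (pub_beh (\<phi>(i := f))) \<le> EU n K Vs Vl P i (pub_beh (\<phi>(i := g)))) \<and>
        (\<exists>\<phi>. valid_pub_profile n K \<phi> \<and>
            EU n K Vs Vl P i (pub_beh (\<phi>(i := f))) < EU n K Vs Vl P i (pub_beh (\<phi>(i := g)))))"

definition equilibrium_pub :: "nat \<Rightarrow> nat \<Rightarrow> real set \<Rightarrow> real set \<Rightarrow> (state \<Rightarrow> real)
    \<Rightarrow> (nat \<Rightarrow> (nat \<Rightarrow> nat) \<Rightarrow> real) \<Rightarrow> bool" where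
  "equilibrium_pub n K Vs Vl P \<phi> \<longleftrightarrow> BNE_pub n K Vs Vl P \<phi> \<and>
     (\<forall>i\<in>voters n. \<not> weakly_dominated_pub n K Vs Vl P i (\<phi> i))"

end

theory Submission
  imports Defs
begin

(* Switching voter i's vote on signal k changes i's expected payoff by a multiple of
   signal_gain i sigma k, a sum of Pr(S = s) * V_i^d(S = s) over profiles with s_i = k, weighted by
   nonnegative pivot probabilities. By the standing assumption linking V_i^d(S = s) to
   V_i^d(S_i = s_i), this gain is nonnegative on good news and nonpositive on every other signal
   in M, whatever the others do; so voting p* exactly on good news is never worse, and only the
   vote x on the uninformative signal s^0 is strategic. By symmetry all voters face the same
   gain on s^0, a continuous function of x, and the intermediate value theorem gives an x that is
   a best response to itself. That x can also be chosen undominated: if gains on s^0 of both signs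
   occur, every x is; otherwise x = 1 or x = 0 is.
   With public information, voting p* iff V_i^d(S = s) > 0 is a best response to everything.
   Against exactly tau others voting p*, voter i is pivotal at every profile, so any strategy
   differing from it on a non-null profile is weakly dominated: this gives uniqueness. *)

section \<open>Winning and pivot probabilities\<close>

lemma finite_voters [simp]: "finite (voters n)"
  by (simp add: voters_def)

definition pivot_prob :: "nat \<Rightarrow> nat \<Rightarrow> (nat \<Rightarrow> real) \<Rightarrow> real" where
  "pivot_prob n i q = win_prob n (q(i := 1)) - win_prob n (q(i := 0))"

lemma prod_fun_upd:
  assumes "finite B"
  shows "(\<Prod>j\<in>B. (q(i := a)) j) = (if i \<in> B then a * (\<Prod>j\<in>B - {i}. q j) else (\<Prod>j\<in>B. q j))"
  using assms by (simp add: prod.delta_remove)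

lemma prod_one_minus_fun_upd:
  assumes "finite B"
  shows "(\<Prod>j\<in>B. 1 - (q(i := a)) j)
       = (if i \<in> B then (1 - a) * (\<Prod>j\<in>B - {i}. 1 - q j) else (\<Prod>j\<in>B. 1 - q j))"
  using assms by (simp add: if_distrib[of "\<lambda>t. 1 - t"] prod.delta_remove)

lemma win_prob_fun_upd:
  "win_prob n (q(i := a)) = win_prob n (q(i := 0)) + a * pivot_prob n i q"
proof -
  let ?W = "{A. A \<subseteq> voters n \<and> card A > tau n}"
  let ?t = "\<lambda>r A. (\<Prod>j\<in>A. r j) * (\<Prod>j\<in>voters n - A. 1 - r j)"
  have "?t (q(i := a)) A = ?t (q(i := 0)) A + a * (?t (q(i := 1)) A - ?t (q(i := 0)) A)"
    if "A \<in> ?W" for A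
  proof -
    have fin: "finite A" "finite (voters n - A)"
      using that finite_subset[OF _ finite_voters] by auto
    show ?thesis
      unfolding prod_fun_upd[OF fin(1)] prod_one_minus_fun_upd[OF fin(2)]
      by (simp add: algebra_simps)
  qed
  then have "win_prob n (q(i := a))
      = (\<Sum>A\<in>?W. ?t (q(i := 0)) A + a * (?t (q(i := 1)) A - ?t (q(i := 0)) A))"
    unfolding win_prob_def by (rule sum.cong[OF refl])
  then show ?thesis
    unfolding pivot_prob_def win_prob_def
    by (simp only: sum_subtractf[symmetric] sum_distrib_left sum.distrib[symmetric])
qed

definition others_prob :: "nat \<Rightarrow> nat \<Rightarrow> (nat \<Rightarrow> real) \<Rightarrow> nat set \<Rightarrow> real" where
  "others_prob n i q B = (\<Prod>j\<in>B. q j) * (\<Prod>j\<in>voters n - {i} - B. 1 - q j)"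

lemma win_prob_fun_upd_1:
  assumes "i \<in> voters n"
  shows "win_prob n (q(i := 1))
       = (\<Sum>A\<in>{A. A \<subseteq> voters n \<and> card A > tau n \<and> i \<in> A}. others_prob n i q (A - {i}))"
proof -
  let ?W = "{A. A \<subseteq> voters n \<and> card A > tau n}"
  have "win_prob n (q(i := 1)) = (\<Sum>A\<in>?W. if i \<in> A then others_prob n i q (A - {i}) else 0)"
    unfolding win_prob_def
  proof (rule sum.cong[OF refl])
    fix A assume "A \<in> ?W"
    then have fin: "finite A" "finite (voters n - A)"
      using finite_subset[OF _ finite_voters] by auto
    have "voters n - A = voters n - {i} - (A - {i})" if "i \<in> A"
      using that by auto
    then show "(\<Prod>j\<in>A. (q(i := 1)) j) * (\<Prod>j\<in>voters n - A. 1 - (q(i := 1)) j)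
        = (if i \<in> A then others_prob n i q (A - {i}) else 0)"
      using assms unfolding prod_fun_upd[OF fin(1)] prod_one_minus_fun_upd[OF fin(2)] others_prob_def
      by auto
  qed
  moreover have "finite ?W"
    by (rule finite_subset[of _ "Pow (voters n)"]) auto
  ultimately show ?thesis
    by (simp add: sum.inter_filter[symmetric])
qed

lemma win_prob_fun_upd_0:
  assumes "i \<in> voters n"
  shows "win_prob n (q(i := 0))
       = (\<Sum>A\<in>{A. A \<subseteq> voters n \<and> card A > tau n \<and> i \<notin> A}. others_prob n i q A)"
proof -
  let ?W = "{A. A \<subseteq> voters n \<and> card A > tau n}"
  have "win_prob n (q(i := 0)) = (\<Sum>A\<in>?W. if i \<notin> A then others_prob n i q A else 0)"
    unfolding win_prob_def
  proof (rule sum.cong[OF refl])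
    fix A assume "A \<in> ?W"
    then have fin: "finite A" "finite (voters n - A)"
      using finite_subset[OF _ finite_voters] by auto
    have "voters n - A - {i} = voters n - {i} - A"
      by auto
    then show "(\<Prod>j\<in>A. (q(i := 0)) j) * (\<Prod>j\<in>voters n - A. 1 - (q(i := 0)) j)
        = (if i \<notin> A then others_prob n i q A else 0)"
      using assms unfolding prod_fun_upd[OF fin(1)] prod_one_minus_fun_upd[OF fin(2)] others_prob_def
      by auto
  qed
  moreover have "finite ?W"
    by (rule finite_subset[of _ "Pow (voters n)"]) auto
  ultimately show ?thesis
    by (simp add: sum.inter_filter[symmetric])
qed

text \<open>Adding \<open>i\<close> to a winning coalition without \<open>i\<close> gives a winning coalition containing \<open>i\<close>.\<close>
lemma pivot_prob_nonneg:
  assumes "i \<in> voters n" and "\<forall>j\<in>voters n. 0 \<le> q j \<and> q j \<le> 1"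
  shows "0 \<le> pivot_prob n i q"
proof -
  let ?W\<^sub>1 = "{A. A \<subseteq> voters n \<and> card A > tau n \<and> i \<in> A}"
  let ?W\<^sub>0 = "{A. A \<subseteq> voters n \<and> card A > tau n \<and> i \<notin> A}"
  have "(\<Sum>A\<in>?W\<^sub>0. others_prob n i q A) = (\<Sum>A\<in>insert i ` ?W\<^sub>0. others_prob n i q (A - {i}))"
    by (subst sum.reindex) (auto intro!: inj_onI sum.cong simp: insert_ident)
  also have "\<dots> \<le> (\<Sum>A\<in>?W\<^sub>1. others_prob n i q (A - {i}))"
  proof (rule sum_mono2)
    show "finite ?W\<^sub>1"
      by (rule finite_subset[of _ "Pow (voters n)"]) auto
    show "insert i ` ?W\<^sub>0 \<subseteq> ?W\<^sub>1"
      using assms(1) finite_subset[OF _ finite_voters] by auto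
    show "0 \<le> others_prob n i q (A - {i})" if "A \<in> ?W\<^sub>1 - insert i ` ?W\<^sub>0" for A
      using that assms(2) unfolding others_prob_def
      by (auto intro!: mult_nonneg_nonneg prod_nonneg)
  qed
  finally show ?thesis
    unfolding pivot_prob_def win_prob_fun_upd_1[OF assms(1)] win_prob_fun_upd_0[OF assms(1)]
    by simp
qed

lemma win_prob_indicator:
  assumes "Y \<subseteq> voters n"
  shows "win_prob n (\<lambda>j. if j \<in> Y then 1 else 0) = (if card Y > tau n then 1 else 0)"
proof -
  let ?W = "{A. A \<subseteq> voters n \<and> card A > tau n}"
  have "(\<Prod>j\<in>A. if j \<in> Y then 1 else 0) * (\<Prod>j\<in>voters n - A. 1 - (if j \<in> Y then 1 else 0))
      = (if A = Y then 1 else (0::real))" if "A \<in> ?W" for A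
  proof (cases "A = Y")
    case False
    have "finite A" "finite (voters n - A)"
      using that finite_subset[OF _ finite_voters] by auto
    moreover consider j where "j \<in> A" "j \<notin> Y" | j where "j \<in> voters n - A" "j \<in> Y"
      using False that assms by blast
    ultimately show ?thesis using False by cases (auto intro: prod_zero)
  qed simp
  then have "win_prob n (\<lambda>j. if j \<in> Y then 1 else 0) = (\<Sum>A\<in>?W. if A = Y then 1 else 0)"
    unfolding win_prob_def by (rule sum.cong[OF refl])
  then show ?thesis using assms by simp
qed

lemma pivot_prob_indicator:
  assumes "i \<in> voters n" and "T \<subseteq> voters n - {i}" and "card T = tau n"
  shows "pivot_prob n i (\<lambda>j. if j \<in> T then 1 else 0) = 1"
proof -
  have "(\<lambda>j. if j \<in> T then 1 else 0)(i := 1) = (\<lambda>j. if j \<in> insert i T then 1 else (0::real))"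
       "(\<lambda>j. if j \<in> T then 1 else 0)(i := 0) = (\<lambda>j. if j \<in> T then 1 else (0::real))"
    using assms(2) by (auto simp: fun_eq_iff)
  moreover have "insert i T \<subseteq> voters n" "T \<subseteq> voters n"
    using assms(1,2) by auto
  moreover have "card (insert i T) = tau n + 1"
    using assms finite_subset[OF assms(2)] by (subst card_insert_disjoint) auto
  ultimately show ?thesis
    using assms(3) unfolding pivot_prob_def by (simp only: win_prob_indicator) simp
qed

lemma win_prob_permute:
  assumes "\<pi> permutes voters n"
  shows "win_prob n (q \<circ> \<pi>) = win_prob n q"
proof -
  have inj: "inj \<pi>" and surj: "surj \<pi>" and img: "\<pi> ` voters n = voters n"
    using assms by (auto simp: permutes_inj permutes_surj permutes_image)
  have inv_img: "inv \<pi> ` voters n = voters n"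
    using permutes_image[OF permutes_inv[OF assms]] .
  have inj_inv: "inj (inv \<pi>)"
    using surj by (rule surj_imp_inj_inv)
  show ?thesis
    unfolding win_prob_def
  proof (rule sum.reindex_bij_witness[where i = "image (inv \<pi>)" and j = "image \<pi>"])
    fix A assume A: "A \<in> {A. A \<subseteq> voters n \<and> card A > tau n}"
    show "inv \<pi> ` \<pi> ` A = A" using inj by (rule image_inv_f_f)
    show "\<pi> ` inv \<pi> ` A = A" using surj by (rule image_f_inv_f)
    show "\<pi> ` A \<in> {A. A \<subseteq> voters n \<and> card A > tau n}"
      using A img inj by (auto simp: card_image inj_on_subset)
    show "inv \<pi> ` A \<in> {A. A \<subseteq> voters n \<and> card A > tau n}"
      using A inv_img inj_inv by (auto simp: card_image inj_on_subset)
    have "voters n - \<pi> ` A = \<pi> ` (voters n - A)"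
      using img inj by (simp add: image_set_diff)
    then show "(\<Prod>j\<in>\<pi> ` A. q j) * (\<Prod>j\<in>voters n - \<pi> ` A. 1 - q j)
        = (\<Prod>j\<in>A. (q \<circ> \<pi>) j) * (\<Prod>j\<in>voters n - A. 1 - (q \<circ> \<pi>) j)"
      using inj by (simp add: prod.reindex inj_on_subset)
  qed
qed

lemma pivot_prob_permute:
  assumes "\<pi> permutes voters n"
  shows "pivot_prob n i (q \<circ> \<pi>) = pivot_prob n (\<pi> i) q"
proof -
  have "(q \<circ> \<pi>)(i := c) = (q(\<pi> i := c)) \<circ> \<pi>" for c
    using permutes_inj[OF assms] by (auto simp: inj_eq)
  then show ?thesis
    by (simp add: pivot_prob_def win_prob_permute[OF assms])
qed

lemma continuous_on_win_prob:
  assumes "\<And>j. continuous_on S (\<lambda>x. Q x j)"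
  shows "continuous_on S (\<lambda>x. win_prob n (Q x))"
  unfolding win_prob_def using assms by (intro continuous_intros)

lemma exists_zero_or_endpoint_sign:
  fixes f :: "real \<Rightarrow> real"
  assumes "continuous_on {0..1} f"
  shows "\<exists>x. 0 \<le> x \<and> x \<le> 1 \<and> (f x > 0 \<longrightarrow> x = 1) \<and> (f x < 0 \<longrightarrow> x = 0)"
proof (cases "f 1 < 0 \<and> f 0 > 0")
  case True
  then obtain x where "0 \<le> x" "x \<le> 1" "f x = 0"
    using IVT2'[of f 1 0 0] assms by auto
  then show ?thesis by auto
next
  case False
  then show ?thesis by (metis order_refl zero_le_one)
qed

section \<open>Expected utility\<close>

lemma finite_Omega: "finite Vs \<Longrightarrow> finite Vl \<Longrightarrow> finite (Omega n K Vs Vl)"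
proof -
  assume "finite Vs" "finite Vl"
  moreover have "Omega n K Vs Vl = PiE {1..n} (\<lambda>_. Vs \<times> Vl) \<times> profiles n K"
    by (auto simp: Omega_def)
  ultimately show ?thesis by (simp add: profiles_def finite_PiE)
qed

lemma EU_fun_upd_diff:
  "EU n K Vs Vl P i (beh(i := c)) - EU n K Vs Vl P i (beh(i := c'))
 = (\<Sum>\<omega>\<in>Omega n K Vs Vl. (c \<omega> - c' \<omega>) * pivot_prob n i (\<lambda>j. beh j \<omega>) * (P \<omega> * Vd i \<omega>))"
  unfolding EU_def sum_subtractf[symmetric]
proof (rule sum.cong[OF refl])
  fix \<omega>
  have upd: "(\<lambda>j. (beh(i := d)) j \<omega>) = (\<lambda>j. beh j \<omega>)(i := d \<omega>)" for d
    by auto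
  show "P \<omega> * (win_prob n (\<lambda>j. (beh(i := c)) j \<omega>) * fst (fst \<omega> i)
        + (1 - win_prob n (\<lambda>j. (beh(i := c)) j \<omega>)) * snd (fst \<omega> i))
      - P \<omega> * (win_prob n (\<lambda>j. (beh(i := c')) j \<omega>) * fst (fst \<omega> i)
        + (1 - win_prob n (\<lambda>j. (beh(i := c')) j \<omega>)) * snd (fst \<omega> i))
    = (c \<omega> - c' \<omega>) * pivot_prob n i (\<lambda>j. beh j \<omega>) * (P \<omega> * Vd i \<omega>)"
    unfolding upd win_prob_fun_upd[of n _ i "c \<omega>"] win_prob_fun_upd[of n _ i "c' \<omega>"] Vd_def
    by (simp add: algebra_simps)
qed

text \<open>If \<open>E\<close> is null, \<open>VdE\<close> is \<open>0\<close> by convention, and so is the sum.\<close>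
lemma Pr_mult_VdE:
  assumes "finite \<Omega>" and "\<forall>\<omega>\<in>\<Omega>. 0 \<le> P \<omega>"
  shows "Pr \<Omega> P E * VdE \<Omega> P i E = (\<Sum>\<omega>\<in>E \<inter> \<Omega>. P \<omega> * Vd i \<omega>)"
proof (cases "Pr \<Omega> P E > 0")
  case False
  moreover have "Pr \<Omega> P E \<ge> 0"
    unfolding Pr_def using assms(2) by (intro sum_nonneg) auto
  ultimately have null: "Pr \<Omega> P E = 0" by simp
  then have "\<forall>\<omega>\<in>E \<inter> \<Omega>. P \<omega> = 0"
    unfolding Pr_def using assms by (subst (asm) sum_nonneg_eq_0_iff) auto
  then show ?thesis using null by simp
qed (simp add: VdE_def)

lemma sum_Vd_by_profile:
  assumes "finite \<Omega>" and "\<forall>\<omega>\<in>\<Omega>. 0 \<le> P \<omega>"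
  shows "(\<Sum>\<omega>\<in>\<Omega>. F (snd \<omega>) * (P \<omega> * Vd i \<omega>))
       = (\<Sum>s\<in>snd ` \<Omega>. F s * (Pr \<Omega> P (prof_event \<Omega> s) * VdE \<Omega> P i (prof_event \<Omega> s)))"
proof -
  have "(\<Sum>\<omega>\<in>\<Omega>. F (snd \<omega>) * (P \<omega> * Vd i \<omega>))
      = (\<Sum>s\<in>snd ` \<Omega>. \<Sum>\<omega>\<in>{\<omega> \<in> \<Omega>. snd \<omega> = s}. F (snd \<omega>) * (P \<omega> * Vd i \<omega>))"
    by (rule sum.image_gen[OF assms(1)])
  also have "\<dots> = (\<Sum>s\<in>snd ` \<Omega>. F s * (\<Sum>\<omega>\<in>prof_event \<Omega> s \<inter> \<Omega>. P \<omega> * Vd i \<omega>))"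
    unfolding sum_distrib_left by (intro sum.cong) (auto simp: prof_event_def)
  finally show ?thesis
    by (simp only: Pr_mult_VdE[OF assms])
qed

section \<open>Symmetry between voters\<close>

lemma PiE_comp_permutes:
  assumes "\<pi> permutes A" and "f \<in> PiE A (\<lambda>_. B)"
  shows "f \<circ> \<pi> \<in> PiE A (\<lambda>_. B)"
  using assms permutes_in_image[OF assms(1)] permutes_not_in[OF assms(1)]
  by (auto simp: PiE_def Pi_def extensional_def)

definition swap_state :: "nat \<Rightarrow> nat \<Rightarrow> state \<Rightarrow> state" where
  "swap_state a b \<omega> = (fst \<omega> \<circ> Transposition.transpose a b, snd \<omega> \<circ> Transposition.transpose a b)"

lemma swap_state_swap_state [simp]: "swap_state a b (swap_state a b \<omega>) = \<omega>"
  by (simp add: swap_state_def comp_assoc)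

locale voting_problem =
  fixes n K :: nat and Vs Vl :: "real set" and P :: "state \<Rightarrow> real"
  assumes standing: "standing_assumptions n K Vs Vl P"
begin

abbreviation \<Omega> :: "state set" where
  "\<Omega> \<equiv> Omega n K Vs Vl"

lemma n_ge_3: "n \<ge> 3"
  using standing by (simp add: standing_assumptions_def Let_def)

lemma one_in_voters: "1 \<in> voters n"
  using n_ge_3 by (simp add: voters_def)

lemma finite_state_space: "finite \<Omega>"
  using standing finite_Omega by (simp add: standing_assumptions_def Let_def)

lemma P_nonneg: "\<forall>\<omega>\<in>\<Omega>. 0 \<le> P \<omega>"
  using standing by (simp add: standing_assumptions_def Let_def)

lemma P_permute: "\<pi> permutes voters n \<Longrightarrow> (v, s) \<in> \<Omega> \<Longrightarrow> P (v \<circ> \<pi>, s \<circ> \<pi>) = P (v, s)"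
  using standing by (simp add: standing_assumptions_def Let_def)

lemma VdE_profile_pos_iff:
  "i \<in> voters n \<Longrightarrow> s \<in> profiles n K \<Longrightarrow> s i \<noteq> 0 \<Longrightarrow>
     VdE \<Omega> P i (prof_event \<Omega> s) > 0 \<longleftrightarrow> VdE \<Omega> P i (sig_event \<Omega> i (s i)) > 0"
  using standing by (simp add: standing_assumptions_def Let_def)

lemma VdE_nonzero: "i \<in> voters n \<Longrightarrow> E \<subseteq> \<Omega> \<Longrightarrow> Pr \<Omega> P E > 0 \<Longrightarrow> VdE \<Omega> P i E \<noteq> 0"
  using standing by (simp add: standing_assumptions_def Let_def)

lemma Pr_nonneg: "Pr \<Omega> P E \<ge> 0"
  unfolding Pr_def using P_nonneg by (intro sum_nonneg) auto

lemma snd_in_profiles: "\<omega> \<in> \<Omega> \<Longrightarrow> snd \<omega> \<in> profiles n K"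
  by (auto simp: Omega_def)

lemma profile_signal_range: "s \<in> profiles n K \<Longrightarrow> i \<in> voters n \<Longrightarrow> s i \<in> {0..K}"
  by (auto simp: profiles_def voters_def)

lemma swap_state_in_Omega:
  assumes "a \<in> voters n" "b \<in> voters n" "\<omega> \<in> \<Omega>"
  shows "swap_state a b \<omega> \<in> \<Omega>"
proof -
  have swap: "Transposition.transpose a b permutes {1..n}"
    using assms(1,2) by (intro permutes_swap_id) (auto simp: voters_def)
  obtain v s where \<omega>: "\<omega> = (v, s)" "v \<in> PiE {1..n} (\<lambda>_. Vs \<times> Vl)" "s \<in> profiles n K"
    using assms(3) by (auto simp: Omega_def)
  have "v \<circ> Transposition.transpose a b \<in> PiE {1..n} (\<lambda>_. Vs \<times> Vl)"
    using \<omega>(2) by (rule PiE_comp_permutes[OF swap])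
  moreover have "s \<circ> Transposition.transpose a b \<in> PiE {1..n} (\<lambda>_. {0..K})"
    using \<omega>(3) unfolding profiles_def by (rule PiE_comp_permutes[OF swap])
  ultimately show ?thesis
    using \<omega>(1) by (simp add: swap_state_def Omega_def profiles_def)
qed

lemma P_swap_state:
  assumes "a \<in> voters n" "b \<in> voters n" "\<omega> \<in> \<Omega>"
  shows "P (swap_state a b \<omega>) = P \<omega>"
  using P_permute[OF permutes_swap_id[OF assms(1,2)], of "fst \<omega>" "snd \<omega>"] assms(3)
  by (simp add: swap_state_def)

lemma Vd_swap_state: "Vd a (swap_state a b \<omega>) = Vd b \<omega>"
  by (simp add: Vd_def swap_state_def)

lemma sum_swap_state:
  assumes "a \<in> voters n" "b \<in> voters n"
  shows "(\<Sum>\<omega>\<in>\<Omega>. F (swap_state a b \<omega>)) = (\<Sum>\<omega>\<in>\<Omega>. F \<omega>)"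
  by (rule sum.reindex_bij_witness[where i = "swap_state a b" and j = "swap_state a b"])
     (auto simp: swap_state_in_Omega assms)

lemma VdE_sig_event_swap:
  assumes "a \<in> voters n" "b \<in> voters n"
  shows "VdE \<Omega> P a (sig_event \<Omega> a k) = VdE \<Omega> P b (sig_event \<Omega> b k)"
proof -
  have swap: "(\<Sum>\<omega>\<in>sig_event \<Omega> a k \<inter> \<Omega>. F a \<omega>) = (\<Sum>\<omega>\<in>sig_event \<Omega> b k \<inter> \<Omega>. F b \<omega>)"
    if "\<And>\<omega>. \<omega> \<in> \<Omega> \<Longrightarrow> F a (swap_state a b \<omega>) = F b \<omega>" for F :: "nat \<Rightarrow> state \<Rightarrow> real"
  proof -
    have sig: "sig_event \<Omega> i k \<inter> \<Omega> = {\<omega> \<in> \<Omega>. snd \<omega> i = k}" for i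
      by (auto simp: sig_event_def)
    have "(\<Sum>\<omega>\<in>\<Omega>. if snd \<omega> a = k then F a \<omega> else 0)
        = (\<Sum>\<omega>\<in>\<Omega>. if snd (swap_state a b \<omega>) a = k then F a (swap_state a b \<omega>) else 0)"
      by (rule sum_swap_state[OF assms, symmetric])
    also have "\<dots> = (\<Sum>\<omega>\<in>\<Omega>. if snd \<omega> b = k then F b \<omega> else 0)"
    proof (rule sum.cong[OF refl])
      fix \<omega> assume "\<omega> \<in> \<Omega>"
      then have "F a (swap_state a b \<omega>) = F b \<omega>"
        by (rule that)
      moreover have "snd (swap_state a b \<omega>) a = snd \<omega> b"
        by (simp add: swap_state_def)
      ultimately show "(if snd (swap_state a b \<omega>) a = k then F a (swap_state a b \<omega>) else 0)
          = (if snd \<omega> b = k then F b \<omega> else 0)"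
        by (simp only:)
    qed
    finally show ?thesis
      unfolding sig sum.inter_filter[OF finite_state_space] .
  qed
  have "Pr \<Omega> P (sig_event \<Omega> a k) = Pr \<Omega> P (sig_event \<Omega> b k)"
    unfolding Pr_def by (rule swap[of "\<lambda>_ \<omega>. P \<omega>"]) (simp add: P_swap_state[OF assms])
  moreover have "(\<Sum>\<omega>\<in>sig_event \<Omega> a k \<inter> \<Omega>. P \<omega> * Vd a \<omega>) = (\<Sum>\<omega>\<in>sig_event \<Omega> b k \<inter> \<Omega>. P \<omega> * Vd b \<omega>)"
    by (rule swap[of "\<lambda>i \<omega>. P \<omega> * Vd i \<omega>"])
       (simp add: P_swap_state[OF assms] Vd_swap_state)
  ultimately show ?thesis
    by (simp add: VdE_def)
qed

lemma good_news_swap: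
  "a \<in> voters n \<Longrightarrow> b \<in> voters n \<Longrightarrow> good_news \<Omega> P a k \<longleftrightarrow> good_news \<Omega> P b k"
  using VdE_sig_event_swap[of a b k] by (simp add: good_news_def)

lemma valid_priv_profile_comp_swap:
  assumes "valid_priv_profile n K \<sigma>" "a \<in> voters n" "b \<in> voters n"
  shows "valid_priv_profile n K (\<sigma> \<circ> Transposition.transpose a b)"
  using assms permutes_in_image[OF permutes_swap_id[OF assms(2,3)]]
  by (simp add: valid_priv_profile_def)

section \<open>Private signals\<close>

definition signal_gain :: "nat \<Rightarrow> (nat \<Rightarrow> nat \<Rightarrow> real) \<Rightarrow> nat \<Rightarrow> real" where
  "signal_gain i \<sigma> k = (\<Sum>\<omega>\<in>\<Omega>.
     (if snd \<omega> i = k then pivot_prob n i (\<lambda>j. \<sigma> j (snd \<omega> j)) else 0) * (P \<omega> * Vd i \<omega>))"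

lemma signal_gain_swap:
  assumes "a \<in> voters n" "b \<in> voters n"
  shows "signal_gain a \<sigma> k = signal_gain b (\<sigma> \<circ> Transposition.transpose a b) k"
proof -
  let ?\<tau> = "Transposition.transpose a b"
  have "signal_gain a \<sigma> k = (\<Sum>\<omega>\<in>\<Omega>.
      (if snd (swap_state a b \<omega>) a = k
       then pivot_prob n a (\<lambda>j. \<sigma> j (snd (swap_state a b \<omega>) j)) else 0)
      * (P (swap_state a b \<omega>) * Vd a (swap_state a b \<omega>)))"
    unfolding signal_gain_def by (rule sum_swap_state[OF assms, symmetric])
  also have "\<dots> = signal_gain b (\<sigma> \<circ> ?\<tau>) k"
    unfolding signal_gain_def
  proof (rule sum.cong[OF refl])
    fix \<omega> assume \<omega>: "\<omega> \<in> \<Omega>"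
    have "(\<lambda>j. \<sigma> j (snd (swap_state a b \<omega>) j)) = (\<lambda>j. (\<sigma> \<circ> ?\<tau>) j (snd \<omega> j)) \<circ> ?\<tau>"
      by (simp add: swap_state_def fun_eq_iff)
    then have "pivot_prob n a (\<lambda>j. \<sigma> j (snd (swap_state a b \<omega>) j))
        = pivot_prob n b (\<lambda>j. (\<sigma> \<circ> ?\<tau>) j (snd \<omega> j))"
      using pivot_prob_permute[OF permutes_swap_id[OF assms]] by simp
    moreover have "snd (swap_state a b \<omega>) a = snd \<omega> b"
      by (simp add: swap_state_def)
    ultimately show "(if snd (swap_state a b \<omega>) a = k
          then pivot_prob n a (\<lambda>j. \<sigma> j (snd (swap_state a b \<omega>) j)) else 0)
        * (P (swap_state a b \<omega>) * Vd a (swap_state a b \<omega>))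
      = (if snd \<omega> b = k then pivot_prob n b (\<lambda>j. (\<sigma> \<circ> ?\<tau>) j (snd \<omega> j)) else 0)
        * (P \<omega> * Vd b \<omega>)"
      by (simp add: P_swap_state[OF assms \<omega>] Vd_swap_state)
  qed
  finally show ?thesis .
qed

lemma EU_priv_fun_upd_diff:
  assumes "i \<in> voters n"
  shows "EU n K Vs Vl P i (priv_beh (\<sigma>(i := g))) - EU n K Vs Vl P i (priv_beh (\<sigma>(i := f)))
       = (\<Sum>k\<in>{0..K}. (g k - f k) * signal_gain i \<sigma> k)"
proof -
  have upd: "priv_beh (\<sigma>(i := h)) = (priv_beh \<sigma>)(i := (\<lambda>\<omega>. h (snd \<omega> i)))" for h
    by (auto simp: priv_beh_def fun_eq_iff)
  let ?G = "\<lambda>\<omega>. pivot_prob n i (\<lambda>j. \<sigma> j (snd \<omega> j)) * (P \<omega> * Vd i \<omega>)"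
  have "EU n K Vs Vl P i (priv_beh (\<sigma>(i := g))) - EU n K Vs Vl P i (priv_beh (\<sigma>(i := f)))
      = (\<Sum>\<omega>\<in>\<Omega>. \<Sum>k\<in>{0..K}. if snd \<omega> i = k then (g k - f k) * ?G \<omega> else 0)"
    unfolding upd EU_fun_upd_diff
  proof (rule sum.cong[OF refl])
    fix \<omega> assume "\<omega> \<in> \<Omega>"
    then have "snd \<omega> i \<in> {0..K}"
      using assms profile_signal_range snd_in_profiles by blast
    then show "(g (snd \<omega> i) - f (snd \<omega> i)) * pivot_prob n i (\<lambda>j. priv_beh \<sigma> j \<omega>) * (P \<omega> * Vd i \<omega>)
      = (\<Sum>k\<in>{0..K}. if snd \<omega> i = k then (g k - f k) * ?G \<omega> else 0)"
      by (simp add: priv_beh_def)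
  qed
  also have "\<dots> = (\<Sum>k\<in>{0..K}. (g k - f k) * signal_gain i \<sigma> k)"
    unfolding signal_gain_def sum_distrib_left
    by (subst sum.swap) (intro sum.cong refl, simp)
  finally show ?thesis .
qed

lemma signal_gain_by_profile:
  "signal_gain i \<sigma> k = (\<Sum>s\<in>snd ` \<Omega>. (if s i = k then pivot_prob n i (\<lambda>j. \<sigma> j (s j)) else 0)
     * (Pr \<Omega> P (prof_event \<Omega> s) * VdE \<Omega> P i (prof_event \<Omega> s)))"
  unfolding signal_gain_def
  by (rule sum_Vd_by_profile[OF finite_state_space P_nonneg,
        where F = "\<lambda>s. if s i = k then pivot_prob n i (\<lambda>j. \<sigma> j (s j)) else 0"])

lemma pivot_prob_priv_nonneg:
  assumes "i \<in> voters n" "valid_priv_profile n K \<sigma>" "s \<in> profiles n K"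
  shows "0 \<le> pivot_prob n i (\<lambda>j. \<sigma> j (s j))"
  using assms profile_signal_range[OF assms(3)]
  by (intro pivot_prob_nonneg) (auto simp: valid_priv_profile_def valid_sig_strategy_def)

lemma signal_gain_good_news_nonneg:
  assumes "i \<in> voters n" "valid_priv_profile n K \<sigma>" "good_news \<Omega> P i k"
  shows "0 \<le> signal_gain i \<sigma> k"
  unfolding signal_gain_by_profile
proof (rule sum_nonneg)
  fix s assume "s \<in> snd ` \<Omega>"
  then have s: "s \<in> profiles n K"
    using snd_in_profiles by auto
  show "0 \<le> (if s i = k then pivot_prob n i (\<lambda>j. \<sigma> j (s j)) else 0)
      * (Pr \<Omega> P (prof_event \<Omega> s) * VdE \<Omega> P i (prof_event \<Omega> s))"
  proof (cases "s i = k")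
    case True
    then have "VdE \<Omega> P i (prof_event \<Omega> s) > 0"
      using assms(3) VdE_profile_pos_iff[OF assms(1) s] by (simp add: good_news_def)
    then show ?thesis
      using True pivot_prob_priv_nonneg[OF assms(1,2) s] Pr_nonneg by simp
  qed simp
qed

lemma signal_gain_not_good_news_nonpos:
  assumes "i \<in> voters n" "valid_priv_profile n K \<sigma>" "k \<noteq> 0" "\<not> good_news \<Omega> P i k"
  shows "signal_gain i \<sigma> k \<le> 0"
  unfolding signal_gain_by_profile
proof (rule sum_nonpos)
  fix s assume "s \<in> snd ` \<Omega>"
  then have s: "s \<in> profiles n K"
    using snd_in_profiles by auto
  show "(if s i = k then pivot_prob n i (\<lambda>j. \<sigma> j (s j)) else 0)
      * (Pr \<Omega> P (prof_event \<Omega> s) * VdE \<Omega> P i (prof_event \<Omega> s)) \<le> 0"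
  proof (cases "s i = k")
    case True
    then have "VdE \<Omega> P i (prof_event \<Omega> s) \<le> 0"
      using assms(3,4) VdE_profile_pos_iff[OF assms(1) s] by (simp add: good_news_def)
    then show ?thesis
      using True pivot_prob_priv_nonneg[OF assms(1,2) s] Pr_nonneg
      by (simp add: mult_nonneg_nonpos)
  qed simp
qed

text \<open>Good news
  is the same for all voters (\<open>good_news_swap\<close>), so voter 1's is used.\<close>
definition sincere_profile :: "real \<Rightarrow> nat \<Rightarrow> nat \<Rightarrow> real" where
  "sincere_profile x j k = (if good_news \<Omega> P 1 k then 1 else if k = 0 then x else 0)"

lemma valid_sincere_profile: "0 \<le> x \<Longrightarrow> x \<le> 1 \<Longrightarrow> valid_priv_profile n K (sincere_profile x)"
  by (simp add: valid_priv_profile_def valid_sig_strategy_def sincere_profile_def)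

definition null_gain :: "real \<Rightarrow> real" where
  "null_gain x = signal_gain 1 (sincere_profile x) 0"

lemma signal_gain_sincere_profile:
  assumes "i \<in> voters n"
  shows "signal_gain i (sincere_profile x) 0 = null_gain x"
proof -
  have "sincere_profile x \<circ> Transposition.transpose i 1 = sincere_profile x"
    by (simp add: fun_eq_iff sincere_profile_def)
  then show ?thesis
    using signal_gain_swap[OF assms one_in_voters] by (simp add: null_gain_def)
qed

lemma EU_deviation_from_sincere_le:
  assumes i: "i \<in> voters n" and \<sigma>: "valid_priv_profile n K \<sigma>" and g: "valid_sig_strategy K g"
  shows "EU n K Vs Vl P i (priv_beh (\<sigma>(i := g)))
         - EU n K Vs Vl P i (priv_beh (\<sigma>(i := sincere_profile x i)))
       \<le> (g 0 - x) * signal_gain i \<sigma> 0"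
proof -
  have "(g k - sincere_profile x i k) * signal_gain i \<sigma> k \<le> 0" if k: "k \<in> {1..K}" for k
  proof -
    have "0 \<le> g k" "g k \<le> 1"
      using g k by (auto simp: valid_sig_strategy_def)
    then show ?thesis
      using k signal_gain_good_news_nonneg[OF i \<sigma>] signal_gain_not_good_news_nonpos[OF i \<sigma>]
        good_news_swap[OF i one_in_voters]
      by (cases "good_news \<Omega> P i k")
         (auto simp: sincere_profile_def mult_nonpos_nonneg mult_nonneg_nonpos)
  qed
  then have "(\<Sum>k\<in>{1..K}. (g k - sincere_profile x i k) * signal_gain i \<sigma> k) \<le> 0"
    by (rule sum_nonpos)
  moreover have "{0..K} = insert 0 {1..K}"
    by auto
  moreover have "sincere_profile x i 0 = x"
    by (simp add: sincere_profile_def good_news_def)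
  ultimately show ?thesis
    unfolding EU_priv_fun_upd_diff[OF i] by simp
qed

lemma BNE_priv_sincere_profile:
  assumes "0 \<le> x" "x \<le> 1" "null_gain x > 0 \<Longrightarrow> x = 1" "null_gain x < 0 \<Longrightarrow> x = 0"
  shows "BNE_priv n K Vs Vl P (sincere_profile x)"
  unfolding BNE_priv_def
proof (intro conjI ballI allI impI)
  show \<sigma>: "valid_priv_profile n K (sincere_profile x)"
    using assms(1,2) by (rule valid_sincere_profile)
  fix i f assume i: "i \<in> voters n" and f: "valid_sig_strategy K f"
  have "(f 0 - x) * null_gain x \<le> 0"
    using assms f by (cases "null_gain x" "0::real" rule: linorder_cases)
      (auto simp: valid_sig_strategy_def mult_nonpos_nonneg mult_nonneg_nonpos)
  then show "EU n K Vs Vl P i (priv_beh ((sincere_profile x)(i := f)))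
      \<le> EU n K Vs Vl P i (priv_beh (sincere_profile x))"
    using EU_deviation_from_sincere_le[OF i \<sigma> f, of x] signal_gain_sincere_profile[OF i] by simp
qed

definition null_gains :: "real set" where
  "null_gains = (\<lambda>\<sigma>. signal_gain 1 \<sigma> 0) ` {\<sigma>. valid_priv_profile n K \<sigma>}"

lemma null_gains_eq:
  assumes "i \<in> voters n"
  shows "null_gains = (\<lambda>\<sigma>. signal_gain i \<sigma> 0) ` {\<sigma>. valid_priv_profile n K \<sigma>}"
  unfolding null_gains_def
proof (intro equalityI image_subsetI)
  fix \<sigma> assume "\<sigma> \<in> {\<sigma>. valid_priv_profile n K \<sigma>}"
  then have "valid_priv_profile n K (\<sigma> \<circ> Transposition.transpose 1 i)"
    "valid_priv_profile n K (\<sigma> \<circ> Transposition.transpose i 1)"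
    using valid_priv_profile_comp_swap assms one_in_voters by auto
  moreover have "signal_gain 1 \<sigma> 0 = signal_gain i (\<sigma> \<circ> Transposition.transpose 1 i) 0"
    "signal_gain i \<sigma> 0 = signal_gain 1 (\<sigma> \<circ> Transposition.transpose i 1) 0"
    using signal_gain_swap assms one_in_voters by blast+
  ultimately show "signal_gain 1 \<sigma> 0 \<in> (\<lambda>\<sigma>. signal_gain i \<sigma> 0) ` {\<sigma>. valid_priv_profile n K \<sigma>}"
    "signal_gain i \<sigma> 0 \<in> (\<lambda>\<sigma>. signal_gain 1 \<sigma> 0) ` {\<sigma>. valid_priv_profile n K \<sigma>}"
    by auto
qed

text \<open>Since \<open>(y - x) * \<gamma>\<close> bounds the payoff change from voting \<open>y\<close> instead of \<open>x\<close> on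
  \<open>s\<^sup>0\<close> (\<open>EU_deviation_from_sincere_le\<close>), this says that no \<open>y\<close> weakly dominates \<open>x\<close>.\<close>
definition undominated_null_vote :: "real \<Rightarrow> bool" where
  "undominated_null_vote x \<longleftrightarrow> (\<forall>y\<in>{0..1}.
     (\<forall>\<gamma>\<in>null_gains. 0 \<le> (y - x) * \<gamma>) \<longrightarrow> (\<forall>\<gamma>\<in>null_gains. (y - x) * \<gamma> \<le> 0))"

lemma sincere_profile_not_weakly_dominated:
  assumes i: "i \<in> voters n" and x: "undominated_null_vote x"
  shows "\<not> weakly_dominated_priv n K Vs Vl P i (sincere_profile x i)"
proof
  assume "weakly_dominated_priv n K Vs Vl P i (sincere_profile x i)"
  then obtain g \<sigma>\<^sub>0 where g: "valid_sig_strategy K g"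
    and weak: "\<forall>\<sigma>. valid_priv_profile n K \<sigma> \<longrightarrow>
      EU n K Vs Vl P i (priv_beh (\<sigma>(i := sincere_profile x i)))
      \<le> EU n K Vs Vl P i (priv_beh (\<sigma>(i := g)))"
    and \<sigma>\<^sub>0: "valid_priv_profile n K \<sigma>\<^sub>0"
    and strict: "EU n K Vs Vl P i (priv_beh (\<sigma>\<^sub>0(i := sincere_profile x i)))
      < EU n K Vs Vl P i (priv_beh (\<sigma>\<^sub>0(i := g)))"
    unfolding weakly_dominated_priv_def by blast
  note bound = EU_deviation_from_sincere_le[OF i _ g, of _ x]
  have "\<forall>\<gamma>\<in>null_gains. 0 \<le> (g 0 - x) * \<gamma>"
    unfolding null_gains_eq[OF i] using weak bound by force
  moreover have "g 0 \<in> {0..1}"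
    using g by (simp add: valid_sig_strategy_def)
  ultimately have "\<forall>\<gamma>\<in>null_gains. (g 0 - x) * \<gamma> \<le> 0"
    using x unfolding undominated_null_vote_def by blast
  then have "(g 0 - x) * signal_gain i \<sigma>\<^sub>0 0 \<le> 0"
    using \<sigma>\<^sub>0 unfolding null_gains_eq[OF i] by blast
  then show False
    using bound[OF \<sigma>\<^sub>0] strict by simp
qed

lemma continuous_null_gain: "continuous_on {0..1} null_gain"
proof -
  have "continuous_on {0..1} (\<lambda>x. ((\<lambda>j. sincere_profile x j (s j))(1 := c)) j)" for s c j
    by (cases "j = 1"; cases "good_news \<Omega> P 1 (s j)"; cases "s j = 0")
       (simp_all add: sincere_profile_def)
  then have "continuous_on {0..1} (\<lambda>x. pivot_prob n 1 (\<lambda>j. sincere_profile x j (s j)))" for s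
    unfolding pivot_prob_def by (intro continuous_intros continuous_on_win_prob)
  then have "continuous_on {0..1}
      (\<lambda>x. if s 1 = 0 then pivot_prob n 1 (\<lambda>j. sincere_profile x j (s j)) else 0)" for s
    by (cases "s 1 = 0") simp_all
  then show ?thesis
    unfolding null_gain_def[abs_def] signal_gain_def by (intro continuous_intros)
qed

lemma exists_sincere_equilibrium_level:
  "\<exists>x. 0 \<le> x \<and> x \<le> 1 \<and> (null_gain x > 0 \<longrightarrow> x = 1) \<and> (null_gain x < 0 \<longrightarrow> x = 0)
     \<and> undominated_null_vote x"
proof -
  have null_gain_mem: "null_gain x \<in> null_gains" if "0 \<le> x" "x \<le> 1" for x
    using valid_sincere_profile[OF that] by (auto simp: null_gain_def null_gains_def)
  consider "\<forall>\<gamma>\<in>null_gains. 0 \<le> \<gamma>" | "\<forall>\<gamma>\<in>null_gains. \<gamma> \<le> 0"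
    | \<gamma>\<^sub>n \<gamma>\<^sub>p where "\<gamma>\<^sub>n \<in> null_gains" "\<gamma>\<^sub>n < 0" "\<gamma>\<^sub>p \<in> null_gains" "\<gamma>\<^sub>p > 0"
    by (meson not_le)
  then show ?thesis
  proof cases
    case 1
    then have "undominated_null_vote 1"
      by (auto simp: undominated_null_vote_def mult_nonpos_nonneg)
    with 1 null_gain_mem[of 1] show ?thesis
      by (intro exI[of _ 1]) auto
  next
    case 2
    then have "undominated_null_vote 0"
      by (auto simp: undominated_null_vote_def mult_nonneg_nonpos)
    with 2 null_gain_mem[of 0] show ?thesis
      by (intro exI[of _ 0]) auto
  next
    case 3
    txt \<open>Gains of both signs force any weakly better \<open>y\<close> to equal \<open>x\<close>.\<close>
    then have "undominated_null_vote x" for x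
      unfolding undominated_null_vote_def by (metis mult_le_0_iff zero_le_mult_iff not_le)
    moreover obtain x where "0 \<le> x" "x \<le> 1" "null_gain x > 0 \<longrightarrow> x = 1" "null_gain x < 0 \<longrightarrow> x = 0"
      using exists_zero_or_endpoint_sign[OF continuous_null_gain] by blast
    ultimately show ?thesis
      by blast
  qed
qed

lemma exists_equilibrium_priv: "\<exists>\<sigma>. equilibrium_priv n K Vs Vl P \<sigma>"
proof -
  obtain x where "0 \<le> x" "x \<le> 1" "null_gain x > 0 \<Longrightarrow> x = 1" "null_gain x < 0 \<Longrightarrow> x = 0"
    and "undominated_null_vote x"
    using exists_sincere_equilibrium_level by blast
  then have "equilibrium_priv n K Vs Vl P (sincere_profile x)"
    unfolding equilibrium_priv_def
    using BNE_priv_sincere_profile sincere_profile_not_weakly_dominated by blast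
  then show ?thesis
    by blast
qed

section \<open>Public information\<close>

definition sincere_pub :: "nat \<Rightarrow> (nat \<Rightarrow> nat) \<Rightarrow> real" where
  "sincere_pub i s = (if VdE \<Omega> P i (prof_event \<Omega> s) > 0 then 1 else 0)"

lemma valid_sincere_pub: "valid_pub_profile n K sincere_pub"
  by (simp add: valid_pub_profile_def valid_pub_strategy_def sincere_pub_def)

lemma EU_pub_fun_upd_diff:
  "EU n K Vs Vl P i (pub_beh (\<phi>(i := g))) - EU n K Vs Vl P i (pub_beh (\<phi>(i := f)))
 = (\<Sum>s\<in>snd ` \<Omega>. (g s - f s) * pivot_prob n i (\<lambda>j. \<phi> j s)
      * (Pr \<Omega> P (prof_event \<Omega> s) * VdE \<Omega> P i (prof_event \<Omega> s)))"
proof -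
  have upd: "pub_beh (\<phi>(i := h)) = (pub_beh \<phi>)(i := (\<lambda>\<omega>. h (snd \<omega>)))" for h
    by (auto simp: pub_beh_def fun_eq_iff)
  show ?thesis
    unfolding upd EU_fun_upd_diff pub_beh_def
    by (rule sum_Vd_by_profile[OF finite_state_space P_nonneg,
          where F = "\<lambda>s. (g s - f s) * pivot_prob n i (\<lambda>j. \<phi> j s)"])
qed

lemma sincere_pub_gain_nonneg:
  assumes "0 \<le> g s" "g s \<le> 1" "0 \<le> p"
  shows "0 \<le> (sincere_pub i s - g s) * p * (Pr \<Omega> P (prof_event \<Omega> s) * VdE \<Omega> P i (prof_event \<Omega> s))"
proof (cases "VdE \<Omega> P i (prof_event \<Omega> s) > 0")
  case True
  then show ?thesis
    using assms Pr_nonneg by (simp add: sincere_pub_def)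
next
  case False
  then have "Pr \<Omega> P (prof_event \<Omega> s) * VdE \<Omega> P i (prof_event \<Omega> s) \<le> 0"
    using Pr_nonneg by (simp add: mult_nonneg_nonpos)
  moreover have "(sincere_pub i s - g s) * p \<le> 0"
    using False assms by (simp add: sincere_pub_def mult_nonpos_nonneg)
  ultimately show ?thesis
    by (simp add: mult_nonpos_nonpos)
qed

lemma sincere_pub_gain_pos:
  assumes "i \<in> voters n" "Pr \<Omega> P (prof_event \<Omega> s) > 0" "0 \<le> g s" "g s \<le> 1" "g s \<noteq> sincere_pub i s"
  shows "0 < (sincere_pub i s - g s) * (Pr \<Omega> P (prof_event \<Omega> s) * VdE \<Omega> P i (prof_event \<Omega> s))"
proof (cases "VdE \<Omega> P i (prof_event \<Omega> s) > 0")
  case True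
  then show ?thesis
    using assms(2-5) by (simp add: sincere_pub_def)
next
  case False
  moreover have "VdE \<Omega> P i (prof_event \<Omega> s) \<noteq> 0"
    using VdE_nonzero[OF assms(1) _ assms(2)] by (auto simp: prof_event_def)
  ultimately have "Pr \<Omega> P (prof_event \<Omega> s) * VdE \<Omega> P i (prof_event \<Omega> s) < 0"
    using assms(2) by (simp add: mult_pos_neg)
  moreover have "sincere_pub i s - g s < 0"
    using False assms(3-5) by (simp add: sincere_pub_def)
  ultimately show ?thesis
    by (simp add: mult_neg_neg)
qed

lemma sincere_pub_best_response:
  assumes i: "i \<in> voters n" and \<phi>: "valid_pub_profile n K \<phi>" and g: "valid_pub_strategy n K g"
  shows "EU n K Vs Vl P i (pub_beh (\<phi>(i := g))) \<le> EU n K Vs Vl P i (pub_beh (\<phi>(i := sincere_pub i)))"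
proof -
  have "0 \<le> EU n K Vs Vl P i (pub_beh (\<phi>(i := sincere_pub i))) - EU n K Vs Vl P i (pub_beh (\<phi>(i := g)))"
    unfolding EU_pub_fun_upd_diff
  proof (rule sum_nonneg)
    fix s assume "s \<in> snd ` \<Omega>"
    then have s: "s \<in> profiles n K"
      using snd_in_profiles by auto
    have "0 \<le> pivot_prob n i (\<lambda>j. \<phi> j s)"
      using i \<phi> s by (intro pivot_prob_nonneg) (auto simp: valid_pub_profile_def valid_pub_strategy_def)
    then show "0 \<le> (sincere_pub i s - g s) * pivot_prob n i (\<lambda>j. \<phi> j s)
        * (Pr \<Omega> P (prof_event \<Omega> s) * VdE \<Omega> P i (prof_event \<Omega> s))"
      using g s by (intro sincere_pub_gain_nonneg) (auto simp: valid_pub_strategy_def)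
  qed
  then show ?thesis
    by simp
qed

lemma equilibrium_sincere_pub: "equilibrium_pub n K Vs Vl P sincere_pub"
  unfolding equilibrium_pub_def BNE_pub_def weakly_dominated_pub_def
  using valid_sincere_pub sincere_pub_best_response by (fastforce simp: not_less)

lemma equilibrium_pub_unique:
  assumes \<psi>: "equilibrium_pub n K Vs Vl P \<psi>" and i: "i \<in> voters n" and s: "s \<in> profiles n K"
    and pos: "Pr \<Omega> P (prof_event \<Omega> s) > 0"
  shows "\<psi> i s = sincere_pub i s"
proof (rule ccontr)
  assume ne: "\<psi> i s \<noteq> sincere_pub i s"
  have \<psi>i: "valid_pub_strategy n K (\<psi> i)"
    using \<psi> i by (simp add: equilibrium_pub_def BNE_pub_def valid_pub_profile_def)
  txt \<open>Against exactly \<open>tau n\<close> others voting for \<open>p*\<close>, voter \<open>i\<close> is pivotal at every profile.\<close>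
  obtain T where T: "T \<subseteq> voters n - {i}" "card T = tau n"
    using obtain_subset_with_card_n[of "tau n" "voters n - {i}"] i
    by (auto simp: voters_def tau_def)
  define \<phi> where "\<phi> j t = (if j \<in> T then 1 else 0 :: real)" for j and t :: "nat \<Rightarrow> nat"
  have \<phi>: "valid_pub_profile n K \<phi>"
    by (simp add: valid_pub_profile_def valid_pub_strategy_def \<phi>_def)
  have pivotal: "pivot_prob n i (\<lambda>j. \<phi> j t) = 1" for t
    using pivot_prob_indicator[OF i T] by (simp add: \<phi>_def)
  have "prof_event \<Omega> s \<inter> \<Omega> \<noteq> {}"
    using pos by (auto simp: Pr_def)
  then have "s \<in> snd ` \<Omega>"
    by (auto simp: prof_event_def)
  then have "0 < EU n K Vs Vl P i (pub_beh (\<phi>(i := sincere_pub i))) - EU n K Vs Vl P i (pub_beh (\<phi>(i := \<psi> i)))"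
    unfolding EU_pub_fun_upd_diff pivotal mult_1_right
  proof (rule sum_pos2[OF finite_imageI[OF finite_state_space]])
    show "0 < (sincere_pub i s - \<psi> i s) * (Pr \<Omega> P (prof_event \<Omega> s) * VdE \<Omega> P i (prof_event \<Omega> s))"
      using \<psi>i s ne by (intro sincere_pub_gain_pos[OF i pos]) (auto simp: valid_pub_strategy_def)
    fix t assume "t \<in> snd ` \<Omega>"
    then show "0 \<le> (sincere_pub i t - \<psi> i t) * (Pr \<Omega> P (prof_event \<Omega> t) * VdE \<Omega> P i (prof_event \<Omega> t))"
      using \<psi>i sincere_pub_gain_nonneg[where p = 1] snd_in_profiles
      by (auto simp: valid_pub_strategy_def)
  qed
  then have "weakly_dominated_pub n K Vs Vl P i (\<psi> i)"
    unfolding weakly_dominated_pub_def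
    using valid_sincere_pub i sincere_pub_best_response[OF i _ \<psi>i] \<phi>
    by (intro exI[of _ "sincere_pub i"] conjI allI impI exI[of _ \<phi>])
       (auto simp: valid_pub_profile_def)
  then show False
    using \<psi> i by (simp add: equilibrium_pub_def)
qed

end

theorem proposition1:
  fixes n K :: nat and Vs Vl :: "real set" and P :: "state \<Rightarrow> real"
  assumes "standing_assumptions n K Vs Vl P"
  shows "(\<exists>\<sigma>. equilibrium_priv n K Vs Vl P \<sigma>)
       \<and> (\<exists>\<phi>. equilibrium_pub n K Vs Vl P \<phi> \<and>
            (\<forall>\<psi>. equilibrium_pub n K Vs Vl P \<psi> \<longrightarrow>
               (\<forall>i\<in>voters n. \<forall>s\<in>profiles n K.
                  Pr (Omega n K Vs Vl) P (prof_event (Omega n K Vs Vl) s) > 0 \<longrightarrow>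
                  \<psi> i s = \<phi> i s)))"
proof -
  interpret voting_problem n K Vs Vl P
    using assms by unfold_locales
  show ?thesis
    using exists_equilibrium_priv equilibrium_sincere_pub equilibrium_pub_unique by blast
qed

end
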